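(* Let $t \geq 5$ be an integer. If $G$ is a connected graph on $n$ vertices satisfying $\sigma_2(G) > \frac{t-3}{t-2}n$, then $G$ has either a Hamiltonian path or an induced subgraph isomorphic to $K_{1,t}$.
   Context: All graphs are finite and simple. A Hamiltonian path of $G$ is a path containing all vertices of $G$. For a graph $G$, $\sigma_2(G)$ denotes the minimum of $\deg(x)+\deg(y)$ over all pairs of distinct nonadjacent vertices $x,y$ of $G$. $K_{1,t}$ denotes the star with one center vertex adjacent to $t$ pairwise nonadjacent leaves. *)

theory Defs
  imports Complex_Main
begin

definition simple_graph :: "'a set \<Rightarrow> ('a \<Rightarrow> 'a \<Rightarrow> bool) \<Rightarrow> bool" where
  "simple_graph V E \<longleftrightarrow> finite V \<and> (\<forall>x y. E x y \<longrightarrow> E y x) \<and> (\<forall>x. \<not> E x x)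
     \<and> (\<forall>x y. E x y \<longrightarrow> x \<in> V \<and> y \<in> V)"

definition degree :: "'a set \<Rightarrow> ('a \<Rightarrow> 'a \<Rightarrow> bool) \<Rightarrow> 'a \<Rightarrow> nat" where
  "degree V E x = card {y \<in> V. E x y}"

definition is_walk :: "'a set \<Rightarrow> ('a \<Rightarrow> 'a \<Rightarrow> bool) \<Rightarrow> 'a list \<Rightarrow> bool" where
  "is_walk V E p \<longleftrightarrow> p \<noteq> [] \<and> set p \<subseteq> V \<and> (\<forall>i. Suc i < length p \<longrightarrow> E (p ! i) (p ! Suc i))"

definition connected_graph :: "'a set \<Rightarrow> ('a \<Rightarrow> 'a \<Rightarrow> bool) \<Rightarrow> bool" where
  "connected_graph V E \<longleftrightarrow> V \<noteq> {} \<and>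
     (\<forall>x\<in>V. \<forall>y\<in>V. \<exists>p. is_walk V E p \<and> hd p = x \<and> last p = y)"

definition hamiltonian_path :: "'a set \<Rightarrow> ('a \<Rightarrow> 'a \<Rightarrow> bool) \<Rightarrow> 'a list \<Rightarrow> bool" where
  "hamiltonian_path V E p \<longleftrightarrow> is_walk V E p \<and> distinct p \<and> set p = V"

text \<open>sigma_2(G) > b, where sigma_2 is the minimum degree sum over distinct
nonadjacent pairs (vacuously true if there are no such pairs, i.e. min of the
empty set is +infinity).\<close>
definition sigma2_gt :: "'a set \<Rightarrow> ('a \<Rightarrow> 'a \<Rightarrow> bool) \<Rightarrow> real \<Rightarrow> bool" where
  "sigma2_gt V E b \<longleftrightarrow> (\<forall>x\<in>V. \<forall>y\<in>V. x \<noteq> y \<and> \<not> E x y \<longrightarrow>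
      real (degree V E x + degree V E y) > b)"

definition has_induced_star :: "'a set \<Rightarrow> ('a \<Rightarrow> 'a \<Rightarrow> bool) \<Rightarrow> nat \<Rightarrow> bool" where
  "has_induced_star V E t \<longleftrightarrow> (\<exists>c L. c \<in> V \<and> L \<subseteq> V \<and> c \<notin> L \<and> card L = t \<and>
     (\<forall>x\<in>L. E c x) \<and> (\<forall>x\<in>L. \<forall>y\<in>L. \<not> E x y))"

end

theory Submission
  imports Defs
begin

(* Suppose G has no induced K_{1,t} and let P be a longest path, with ends a and b, that misses
   some vertex z. Then a, b, z are pairwise nonadjacent and have all their neighbours on P.
   Posa rotations of P show that a is adjacent to no successor of a neighbour of b, and that z
   is adjacent neither to the predecessor of a neighbour of a, nor to the successor of a
   neighbour of b, nor to two consecutive vertices of P. Counting positions on P then gives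
   d(a) + d(b) + d(z) + 2 <= n + |N(a) \<inter> N(b) \<inter> N(z)|, and the sigma_2 bound turns this into
   |N(a) \<inter> N(b) \<inter> N(z)| >= t - 2.
   For each common neighbour of a and z on P, rotating P at it gives a longest path from its
   predecessor to b, so each predecessor has at least t - 2 neighbours in N(b) \<inter> N(z). The
   predecessors are pairwise nonadjacent, so a vertex of N(b) \<inter> N(z) sees at most t - 3 of
   them: otherwise, with b and z, they would be the leaves of an induced K_{1,t}. Double
   counting gives (t - 2) |N(a) \<inter> N(z)| <= (t - 3) |N(b) \<inter> N(z)|, and likewise with a and b
   exchanged, which is impossible since N(a) \<inter> N(z) is nonempty. So P is Hamiltonian. *)

lemma successively_edge_leaving:
  assumes "successively R xs" "xs \<noteq> []" "hd xs \<in> S" "last xs \<notin> S"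
  shows "\<exists>u \<in> set xs \<inter> S. \<exists>v \<in> set xs - S. R u v"
  using assms by (induction xs rule: induct_list012) auto

definition positions :: "'a list \<Rightarrow> 'a set \<Rightarrow> nat set" where
  "positions xs S = {i. i < length xs \<and> xs ! i \<in> S}"

lemma positions_Int: "positions xs (A \<inter> B) = positions xs A \<inter> positions xs B"
  by (auto simp: positions_def)

lemma positions_Int_set: "positions xs (S \<inter> set xs) = positions xs S"
  by (auto simp: positions_def)

lemma card_positions:
  assumes "distinct xs" "S \<subseteq> set xs"
  shows "card (positions xs S) = card S"
proof -
  have "set (filter (\<lambda>x. x \<in> S) xs) = S" using assms(2) by auto
  then have "card S = length (filter (\<lambda>x. x \<in> S) xs)"
    using distinct_card[OF distinct_filter[OF assms(1)]] by metis
  then show ?thesis by (simp add: length_filter_conv_card positions_def)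
qed

lemma double_counting_le:
  assumes "finite A" "finite B"
    and "\<And>x. x \<in> A \<Longrightarrow> k \<le> card {y \<in> B. R x y}"
    and "\<And>y. y \<in> B \<Longrightarrow> card {x \<in> A. R x y} \<le> l"
  shows "k * card A \<le> l * card B"
proof -
  have "k * card A \<le> (\<Sum>x\<in>A. card {y \<in> B. R x y})"
    using sum_bounded_below[of A k] assms(3) by (simp add: mult.commute)
  also have "\<dots> = (\<Sum>y\<in>B. card {x \<in> A. R x y})"
    using sum.swap_restrict[OF assms(1,2), of "\<lambda>_ _. 1::nat" R] by simp
  also have "\<dots> \<le> l * card B"
    using sum_bounded_above[of B _ l] assms(4) by (simp add: mult.commute)
  finally show ?thesis .
qed

(* Ia, Ib, Iz stand for the positions on a path v_0 ... v_{p-1} of the neighbours of v_0, of v_{p-1}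
   and of a vertex off the path. The hypotheses make Ia, Suc ` Ib, Iz - Ia and Suc ` (Iz \<inter> Ia - Ib)
   pairwise disjoint subsets of {1..<p}. *)
lemma card_index_sets_le:
  fixes Ia Ib Iz :: "nat set"
  assumes "Ia \<subseteq> {1..<p}" "Ib \<subseteq> {..<p - 1}" "Iz \<subseteq> {1..<p - 1}"
    and "\<And>j. Suc j \<in> Ia \<Longrightarrow> j \<notin> Ib"
    and "\<And>j. Suc j \<in> Iz \<Longrightarrow> j \<notin> Ib"
    and "\<And>j. j \<in> Iz \<Longrightarrow> Suc j \<notin> Ia"
    and "\<And>j. j \<in> Iz \<Longrightarrow> Suc j \<notin> Iz"
  shows "card Ia + card Ib + card Iz \<le> p - 1 + card (Ia \<inter> Ib \<inter> Iz)"
proof -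
  define K where "K = Iz \<inter> Ia - Ib"
  have fin: "finite Ia" "finite Ib" "finite Iz"
    using assms(1-3) by (auto intro: finite_subset)
  have "card Iz = card (Ia \<inter> Ib \<inter> Iz) + card (Iz - Ia) + card K"
  proof -
    have "(Ia \<inter> Ib \<inter> Iz) \<union> (Iz - Ia) \<union> K = Iz" by (auto simp: K_def)
    moreover have "card ((Ia \<inter> Ib \<inter> Iz) \<union> (Iz - Ia) \<union> K)
        = card (Ia \<inter> Ib \<inter> Iz) + card (Iz - Ia) + card K"
      using fin by (subst card_Un_disjoint; auto simp: K_def)+
    ultimately show ?thesis by simp
  qed
  moreover have "card Ia + card (Suc ` Ib) + card (Iz - Ia) + card (Suc ` K) \<le> p - 1"
  proof -
    have "Ia \<union> Suc ` Ib \<union> (Iz - Ia) \<union> Suc ` K \<subseteq> {1..<p}"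
      using assms(1-3) by (auto simp: K_def subset_iff)
    then have "card (Ia \<union> Suc ` Ib \<union> (Iz - Ia) \<union> Suc ` K) \<le> p - 1"
      using card_mono[of "{1..<p}"] by fastforce
    moreover have "card (Ia \<union> Suc ` Ib \<union> (Iz - Ia) \<union> Suc ` K)
        = card Ia + card (Suc ` Ib) + card (Iz - Ia) + card (Suc ` K)"
      using fin assms(4-7) by (subst card_Un_disjoint; auto simp: K_def)+
    ultimately show ?thesis by simp
  qed
  ultimately show ?thesis by (simp add: card_image)
qed

lemma sigma2_common_nbrs_arith:
  fixes t n da db dz k :: nat
  assumes "5 \<le> t" "da + db + dz + 2 \<le> n + k" "da + db + 2 \<le> n"
    and "(real t - 3) / (real t - 2) * n < da + db"
    and "(real t - 3) / (real t - 2) * n < da + dz"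
    and "(real t - 3) / (real t - 2) * n < db + dz"
  shows "t - 2 \<le> k"
proof -
  define s where "s = real t - 2"
  have s: "3 \<le> s" using assms(1) by (simp add: s_def)
  have "(s - 1) / s * n < da + db" "(s - 1) / s * n < da + dz" "(s - 1) / s * n < db + dz"
    using assms(4-6) by (simp_all add: s_def algebra_simps)
  then have ab: "(s - 1) * n < s * (da + db)" and az: "(s - 1) * n < s * (da + dz)"
    and bz: "(s - 1) * n < s * (db + dz)"
    using s by (simp_all add: pos_divide_less_eq mult.commute)
  have "s * (da + db) \<le> s * (real n - 2)"
    using assms(3) s by (intro mult_left_mono) auto
  then have "(s - 1) * n < s * (real n - 2)" using ab by linarith
  then have n_large: "2 * s < n" by (simp add: algebra_simps)
  have "s * (da + db + dz) \<le> s * (real n + k - 2)"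
    using assms(2) s by (intro mult_left_mono) auto
  then have "3 * (s - 1) * n < 2 * s * (real n + k - 2)"
    using ab az bz by (simp add: algebra_simps)
  moreover have "2 * s * (s - 3) \<le> (s - 3) * n"
    using mult_left_mono[of "2 * s" n "s - 3"] n_large s by (simp add: mult.commute)
  ultimately have "s * (s - 1) < s * k" by (simp add: algebra_simps)
  then have "s - 1 < k" using s by simp
  then show ?thesis by (simp add: s_def)
qed

lemma is_walk_iff_successively:
  "is_walk V E p \<longleftrightarrow> p \<noteq> [] \<and> set p \<subseteq> V \<and> successively E p"
  by (simp add: is_walk_def successively_conv_nth)

lemma rev_take_append_drop:
  assumes "Suc j < length xs"
  shows "hd (rev (take (Suc j) xs) @ drop (Suc j) xs) = xs ! j"
    and "last (rev (take (Suc j) xs) @ drop (Suc j) xs) = last xs"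
    and "set (rev (take (Suc j) xs) @ drop (Suc j) xs) = set xs"
    and "i \<le> j \<Longrightarrow> (rev (take (Suc j) xs) @ drop (Suc j) xs) ! i = xs ! (j - i)"
proof -
  show "hd (rev (take (Suc j) xs) @ drop (Suc j) xs) = xs ! j"
    using assms by (simp add: take_Suc_conv_app_nth)
  show "last (rev (take (Suc j) xs) @ drop (Suc j) xs) = last xs"
    using assms by simp
  show "set (rev (take (Suc j) xs) @ drop (Suc j) xs) = set xs"
    by (metis set_append set_rev append_take_drop_id)
  show "i \<le> j \<Longrightarrow> (rev (take (Suc j) xs) @ drop (Suc j) xs) ! i = xs ! (j - i)"
    using assms by (simp add: nth_append rev_nth)
qed

lemma split_at_consecutive:
  assumes "Suc j < length xs"
  obtains A B where "xs = A @ B" "A \<noteq> []" "B \<noteq> []" "last A = xs ! j" "hd B = xs ! Suc j"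
proof
  show "xs = take (Suc j) xs @ drop (Suc j) xs" by simp
qed (use assms in \<open>auto simp: take_Suc_conv_app_nth hd_drop_conv_nth\<close>)

locale connected_simple_graph =
  fixes V :: "'a set" and E :: "'a \<Rightarrow> 'a \<Rightarrow> bool"
  assumes simple: "simple_graph V E" and connected: "connected_graph V E"
begin

definition nbrs :: "'a \<Rightarrow> 'a set" where
  "nbrs x = {y \<in> V. E x y}"

definition is_path :: "'a list \<Rightarrow> bool" where
  "is_path L \<longleftrightarrow> L \<noteq> [] \<and> set L \<subseteq> V \<and> distinct L \<and> successively E L"

definition longest_path :: "'a list \<Rightarrow> bool" where
  "longest_path L \<longleftrightarrow> is_path L \<and> (\<forall>L'. is_path L' \<longrightarrow> length L' \<le> length L)"

lemma finite_V: "finite V"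
  and edge_sym: "E x y \<Longrightarrow> E y x"
  and edge_irrefl: "\<not> E x x"
  and edge_in_V: "E x y \<Longrightarrow> x \<in> V \<and> y \<in> V"
  using simple by (auto simp: simple_graph_def)

lemma successively_rev_iff [simp]: "successively E (rev xs) \<longleftrightarrow> successively E xs"
proof -
  have "(\<lambda>x y. E y x) = E" using edge_sym by blast
  then show ?thesis by (metis successively_rev)
qed

declare successively_rev [simp del]

lemma finite_nbrs: "finite (nbrs x)"
  using finite_V by (simp add: nbrs_def)

lemma degree_eq_card_nbrs: "degree V E x = card (nbrs x)"
  by (simp add: degree_def nbrs_def)

lemma is_path_length_le:
  assumes "is_path L"
  shows "length L \<le> card V"
proof -
  have "length L = card (set L)" using assms by (simp add: is_path_def distinct_card)
  also have "\<dots> \<le> card V" using assms finite_V by (intro card_mono) (auto simp: is_path_def)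
  finally show ?thesis .
qed

lemma longest_path_is_path: "longest_path Q \<Longrightarrow> is_path Q"
  and longest_path_length_ge: "longest_path Q \<Longrightarrow> is_path L \<Longrightarrow> length L \<le> length Q"
  by (simp_all add: longest_path_def)

lemma exists_longest_path: "\<exists>Q. longest_path Q"
proof -
  let ?len = "\<lambda>k. \<exists>L. is_path L \<and> length L = k"
  obtain v where "v \<in> V" using connected by (auto simp: connected_graph_def)
  then have "is_path [v]" by (simp add: is_path_def)
  then have "?len 1" by force
  moreover have "\<forall>k. ?len k \<longrightarrow> k \<le> card V" using is_path_length_le by blast
  ultimately obtain k where k: "?len k" and k_max: "\<forall>k'. ?len k' \<longrightarrow> k' \<le> k"
    using Nat.ex_has_greatest_nat[where P = ?len] by blast
  obtain L where "is_path L" "length L = k" using k by blast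
  then have "longest_path L" using k_max by (auto simp: longest_path_def)
  then show ?thesis ..
qed

lemma longest_path_rev: "longest_path Q \<Longrightarrow> longest_path (rev Q)"
  by (simp add: longest_path_def is_path_def)

lemma longest_path_hd_nbrs: "longest_path Q \<Longrightarrow> nbrs (hd Q) \<subseteq> set Q"
proof
  fix y assume Q: "longest_path Q" and "y \<in> nbrs (hd Q)"
  show "y \<in> set Q"
  proof (rule ccontr)
    assume "y \<notin> set Q"
    moreover have "y \<in> V" "E y (hd Q)"
      using \<open>y \<in> nbrs (hd Q)\<close> edge_sym unfolding nbrs_def by blast+
    ultimately have "is_path (y # Q)"
      using Q by (cases Q) (auto simp: is_path_def longest_path_def)
    then show False using longest_path_length_ge[OF Q] by fastforce
  qed
qed

lemma longest_path_last_nbrs: "longest_path Q \<Longrightarrow> nbrs (last Q) \<subseteq> set Q"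
  using longest_path_hd_nbrs[OF longest_path_rev, of Q]
  by (simp add: hd_rev longest_path_def is_path_def)

lemma longest_path_edge_leaving:
  assumes "longest_path Q" "z \<in> V" "z \<notin> set Q"
  shows "\<exists>x \<in> set Q. \<exists>y \<in> V - set Q. E x y"
proof -
  have Q: "Q \<noteq> []" "set Q \<subseteq> V"
    using assms(1) by (auto simp: longest_path_def is_path_def)
  then have "hd Q \<in> V" by auto
  then obtain W where W: "is_walk V E W" "hd W = hd Q" "last W = z"
    using connected assms(2) unfolding connected_graph_def by blast
  then show ?thesis
    using successively_edge_leaving[of E W "set Q"] Q assms(3)
    by (auto simp: is_walk_iff_successively)
qed

lemma longest_path_hd_ne_last:
  assumes "longest_path Q" "z \<in> V" "z \<notin> set Q"
  shows "hd Q \<noteq> last Q"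
proof
  assume "hd Q = last Q"
  moreover have "Q \<noteq> []" "distinct Q"
    using assms(1) by (auto simp: longest_path_def is_path_def)
  ultimately have "set Q = {hd Q}"
    by (cases Q; cases "tl Q") auto
  then show False
    using longest_path_edge_leaving[OF assms] longest_path_hd_nbrs[OF assms(1)] edge_in_V
    by (auto simp: nbrs_def)
qed

lemma longest_path_ends_nonadjacent:
  assumes "longest_path Q" "z \<in> V" "z \<notin> set Q"
  shows "\<not> E (hd Q) (last Q)"
proof
  assume closing: "E (hd Q) (last Q)"
  obtain x y where xy: "x \<in> set Q" "y \<in> V - set Q" "E x y"
    using longest_path_edge_leaving[OF assms] by blast
  then obtain A B where Q: "Q = A @ x # B" by (meson split_list)
  have "successively E (x # B)" "successively E A"
    using assms(1) by (auto simp: Q longest_path_def is_path_def successively_append_iff)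
  moreover have "A \<noteq> [] \<Longrightarrow> E (last (x # B)) (hd A)"
    using edge_sym[OF closing] by (simp add: Q)
  ultimately have "successively E (x # B @ A)"
    using successively_append_iff[of E "x # B" A] by (auto split: if_splits)
  then have "is_path (y # x # B @ A)"
    using assms(1) xy edge_sym[OF xy(3)] by (auto simp: Q longest_path_def is_path_def)
  then show False using longest_path_length_ge[OF assms(1)] Q by fastforce
qed

lemma longest_path_rotate:
  assumes "longest_path Q" "Suc j < length Q" "E (hd Q) (Q ! Suc j)"
  shows "longest_path (rev (take (Suc j) Q) @ drop (Suc j) Q)"
proof -
  have "is_path (rev (take (Suc j) Q) @ drop (Suc j) Q)"
  proof -
    have "is_path (take (Suc j) Q @ drop (Suc j) Q)"
      using assms(1) by (simp add: longest_path_def)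
    then show ?thesis using assms(2,3)
      by (auto simp: is_path_def successively_append_iff hd_drop_conv_nth last_rev
          simp del: append_take_drop_id)
  qed
  moreover have "length (rev (take (Suc j) Q) @ drop (Suc j) Q) = length Q"
    using assms(2) by simp
  ultimately show ?thesis using assms(1) unfolding longest_path_def by metis
qed

lemma longest_path_rotate_hd_nbrs:
  assumes "longest_path Q" "Suc j < length Q" "E (hd Q) (Q ! Suc j)"
  shows "nbrs (Q ! j) \<subseteq> set Q"
  using longest_path_hd_nbrs[OF longest_path_rotate[OF assms]] rev_take_append_drop[OF assms(2)]
  by simp

lemma longest_path_rotate_last_nbrs:
  assumes Q: "longest_path Q" and j: "Suc j < length Q" and "E (Q ! j) (last Q)"
  shows "nbrs (Q ! Suc j) \<subseteq> set Q"
proof -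
  let ?k = "length Q - Suc (Suc j)"
  have k: "Suc ?k < length (rev Q)" and "rev Q ! Suc ?k = Q ! j" "rev Q ! ?k = Q ! Suc j"
    using j by (simp_all add: rev_nth Suc_diff_Suc)
  moreover have "hd (rev Q) = last Q"
    using Q by (simp add: hd_rev longest_path_def is_path_def)
  ultimately have "E (hd (rev Q)) (rev Q ! Suc ?k)" using edge_sym[OF assms(3)] by simp
  from longest_path_rotate_hd_nbrs[OF longest_path_rev[OF Q] k this]
  show ?thesis using \<open>rev Q ! ?k = Q ! Suc j\<close> by simp
qed

lemma longest_path_no_crossing:
  assumes Q: "longest_path Q" and z: "z \<in> V" "z \<notin> set Q"
    and j: "Suc j < length Q" and "E (hd Q) (Q ! Suc j)"
  shows "\<not> E (Q ! j) (last Q)"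
proof -
  note R = rev_take_append_drop[OF j]
  have "z \<notin> set (rev (take (Suc j) Q) @ drop (Suc j) Q)" by (subst R(3)) (rule z(2))
  then show ?thesis
    using longest_path_ends_nonadjacent[OF longest_path_rotate[OF Q j assms(5)] z(1)] R by simp
qed

lemma longest_path_outside_nbrs_nonconsecutive:
  assumes Q: "longest_path Q" and z: "z \<in> V" "z \<notin> set Q"
    and j: "Suc j < length Q" and "E z (Q ! j)"
  shows "\<not> E z (Q ! Suc j)"
proof
  assume "E z (Q ! Suc j)"
  obtain A B where AB: "Q = A @ B" "A \<noteq> []" "B \<noteq> []" "last A = Q ! j" "hd B = Q ! Suc j"
    using split_at_consecutive[OF j] .
  have "successively E (A @ z # B)"
    using Q AB edge_sym[OF assms(5)] \<open>E z (Q ! Suc j)\<close>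
    by (auto simp: longest_path_def is_path_def successively_append_iff successively_Cons)
  then have "is_path (A @ z # B)"
    using Q AB(1) z by (auto simp: longest_path_def is_path_def)
  then have "length (A @ z # B) \<le> length Q" by (rule longest_path_length_ge[OF Q])
  then show False using AB(1) by simp
qed

lemma longest_path_predecessors_nonadjacent:
  assumes Q: "longest_path Q" and z: "z \<notin> set Q"
    and "j < l" "Suc l < length Q" "E (hd Q) (Q ! Suc l)" "E z (Q ! Suc j)"
  shows "\<not> E (Q ! j) (Q ! l)"
proof
  assume "E (Q ! j) (Q ! l)"
  let ?R = "rev (take (Suc l) Q) @ drop (Suc l) Q"
  note R = rev_take_append_drop[OF \<open>Suc l < length Q\<close>]
  have "longest_path ?R" using longest_path_rotate[OF Q] assms(4,5) .
  moreover have "?R ! (l - Suc j) = Q ! Suc j" "?R ! Suc (l - Suc j) = Q ! j"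
    using R(4) \<open>j < l\<close> by (simp_all add: Suc_diff_Suc)
  moreover have "Suc (l - Suc j) < length ?R" using assms(3,4) by simp
  moreover have "E (hd ?R) (Q ! j)" using R(1) edge_sym[OF \<open>E (Q ! j) (Q ! l)\<close>] by simp
  ultimately have "nbrs (Q ! Suc j) \<subseteq> set Q"
    using longest_path_rotate_hd_nbrs[of ?R "l - Suc j"] R(3) by simp
  moreover have "z \<in> nbrs (Q ! Suc j)"
    using edge_sym[OF assms(6)] edge_in_V by (simp add: nbrs_def)
  ultimately show False using z by blast
qed

lemma card_outside_nbrs_le:
  assumes "is_path Q" "z \<in> V" "z \<notin> set Q"
  shows "card (nbrs z - set Q) + length Q + 1 \<le> card V"
proof -
  have Q: "set Q \<subseteq> V" "card (set Q) = length Q"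
    using assms(1) by (auto simp: is_path_def distinct_card)
  have "nbrs z - set Q \<subseteq> V - insert z (set Q)"
    using edge_irrefl by (auto simp: nbrs_def)
  then have "card (nbrs z - set Q) \<le> card (V - insert z (set Q))"
    by (intro card_mono) (simp_all add: finite_V)
  also have "\<dots> = card V - (length Q + 1)"
    using Q assms(2,3) finite_V by (simp add: card_Diff_subset)
  moreover have "length Q + 1 \<le> card V"
    using Q assms(2,3) finite_V card_mono[of V "insert z (set Q)"] by simp
  ultimately show ?thesis by linarith
qed

lemma longest_path_positions_card_le:
  assumes Q: "longest_path Q" and z: "z \<in> V" "z \<notin> set Q"
  shows "card (positions Q (nbrs (hd Q))) + card (positions Q (nbrs (last Q)))
      + card (positions Q (nbrs z))
    \<le> length Q - 1 + card (positions Q (nbrs (hd Q) \<inter> nbrs (last Q) \<inter> nbrs z))"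
  unfolding positions_Int
proof (rule card_index_sets_le)
  let ?a = "hd Q" and ?b = "last Q" and ?p = "length Q"
  have Qp: "Q \<noteq> []" using Q by (simp add: longest_path_def is_path_def)
  then have a: "?a = Q ! 0" and b: "?b = Q ! (?p - 1)" by (simp_all add: hd_conv_nth last_conv_nth)
  have za: "\<not> E z ?a" and zb: "\<not> E z ?b"
    using longest_path_hd_nbrs[OF Q] longest_path_last_nbrs[OF Q] z edge_sym
    unfolding nbrs_def by blast+
  show "positions Q (nbrs ?a) \<subseteq> {1..<?p}"
    using a edge_irrefl by (auto simp: positions_def nbrs_def Suc_le_eq intro!: gr0I)
  show "positions Q (nbrs ?b) \<subseteq> {..<?p - 1}"
  proof
    fix i assume "i \<in> positions Q (nbrs ?b)"
    then have "i < ?p" "i \<noteq> ?p - 1" using b edge_irrefl by (auto simp: positions_def nbrs_def)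
    then show "i \<in> {..<?p - 1}" by simp
  qed
  show "positions Q (nbrs z) \<subseteq> {1..<?p - 1}"
  proof
    fix i assume "i \<in> positions Q (nbrs z)"
    then have "i < ?p" "E z (Q ! i)" by (auto simp: positions_def nbrs_def)
    moreover from \<open>E z (Q ! i)\<close> have "i \<noteq> 0" "i \<noteq> ?p - 1" using a b za zb by metis+
    ultimately show "i \<in> {1..<?p - 1}" by simp
  qed
  show "j \<notin> positions Q (nbrs ?b)" if "Suc j \<in> positions Q (nbrs ?a)" for j
  proof
    assume "j \<in> positions Q (nbrs ?b)"
    with that have "Suc j < ?p" "E ?a (Q ! Suc j)" "E ?b (Q ! j)"
      by (auto simp: positions_def nbrs_def)
    then show False using longest_path_no_crossing[OF Q z] edge_sym by blast
  qed
  show "j \<notin> positions Q (nbrs ?b)" if "Suc j \<in> positions Q (nbrs z)" for j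
  proof
    assume "j \<in> positions Q (nbrs ?b)"
    with that have "Suc j < ?p" "E z (Q ! Suc j)" "E ?b (Q ! j)"
      by (auto simp: positions_def nbrs_def)
    then show False
      using longest_path_rotate_last_nbrs[OF Q] z edge_sym edge_in_V unfolding nbrs_def by blast
  qed
  show "Suc j \<notin> positions Q (nbrs ?a)" if "j \<in> positions Q (nbrs z)" for j
  proof
    assume "Suc j \<in> positions Q (nbrs ?a)"
    with that have "Suc j < ?p" "E z (Q ! j)" "E ?a (Q ! Suc j)"
      by (auto simp: positions_def nbrs_def)
    then show False
      using longest_path_rotate_hd_nbrs[OF Q] z edge_sym edge_in_V unfolding nbrs_def by blast
  qed
  show "Suc j \<notin> positions Q (nbrs z)" if "j \<in> positions Q (nbrs z)" for j
    using that longest_path_outside_nbrs_nonconsecutive[OF Q z, of j]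
    by (auto simp: positions_def nbrs_def)
qed

lemma longest_path_degree_sum:
  assumes Q: "longest_path Q" and z: "z \<in> V" "z \<notin> set Q"
  shows "card (nbrs (hd Q)) + card (nbrs (last Q)) + card (nbrs z) + 2
    \<le> card V + card (nbrs (hd Q) \<inter> nbrs (last Q) \<inter> nbrs z)"
proof -
  let ?C = "nbrs (hd Q) \<inter> nbrs (last Q) \<inter> nbrs z"
  have Qp: "Q \<noteq> []" "distinct Q" using Q by (auto simp: longest_path_def is_path_def)
  have Na: "nbrs (hd Q) \<subseteq> set Q" and Nb: "nbrs (last Q) \<subseteq> set Q"
    using longest_path_hd_nbrs[OF Q] longest_path_last_nbrs[OF Q] .
  then have "?C \<subseteq> set Q" by blast
  note card_pos = card_positions[OF Qp(2) Na] card_positions[OF Qp(2) Nb]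
    card_positions[OF Qp(2) this]
  have "card (nbrs z) = card (nbrs z \<inter> set Q) + card (nbrs z - set Q)"
    using finite_nbrs by (rule card_Int_Diff)
  moreover have "card (nbrs z \<inter> set Q) = card (positions Q (nbrs z))"
    using card_positions[OF Qp(2), of "nbrs z \<inter> set Q"] by (simp add: positions_Int_set)
  moreover have "card (nbrs z - set Q) + length Q + 1 \<le> card V"
    using card_outside_nbrs_le[OF longest_path_is_path[OF Q] z] .
  moreover have "1 \<le> length Q" using Qp(1) by (simp add: Suc_le_eq)
  ultimately show ?thesis
    using longest_path_positions_card_le[OF Q z] card_pos by linarith
qed

lemma longest_path_rotation_heads:
  assumes Q: "longest_path Q" and z: "z \<in> V" "z \<notin> set Q"
  obtains X where "card X = card (nbrs (hd Q) \<inter> nbrs z)"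
    and "\<And>x. x \<in> X \<Longrightarrow> \<exists>R. longest_path R \<and> hd R = x \<and> last R = last Q \<and> set R = set Q"
    and "\<And>x y. x \<in> X \<Longrightarrow> y \<in> X \<Longrightarrow> \<not> E x y"
proof
  let ?M = "nbrs (hd Q) \<inter> nbrs z"
  define J where "J = {j. Suc j < length Q \<and> Q ! Suc j \<in> ?M}"
  have Qp: "Q \<noteq> []" "distinct Q" using Q by (auto simp: longest_path_def is_path_def)
  have "card ?M = card (positions Q ?M)"
    using longest_path_hd_nbrs[OF Q] by (intro card_positions[OF Qp(2), symmetric]) auto
  also have "positions Q ?M = Suc ` J"
  proof -
    have "Q ! 0 \<notin> ?M" using Qp(1) edge_irrefl by (simp add: hd_conv_nth nbrs_def)
    then have "i \<in> Suc ` J" if "i < length Q" "Q ! i \<in> ?M" for i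
      using that not0_implies_Suc[of i] by (auto simp: J_def)
    then show ?thesis by (auto simp: J_def positions_def)
  qed
  also have "card (Suc ` J) = card ((!) Q ` J)"
    using inj_on_nth[OF Qp(2), of J] by (simp add: card_image J_def)
  finally show "card ((!) Q ` J) = card ?M" ..
  show "\<exists>R. longest_path R \<and> hd R = x \<and> last R = last Q \<and> set R = set Q" if "x \<in> (!) Q ` J" for x
  proof -
    obtain j where j: "Suc j < length Q" "E (hd Q) (Q ! Suc j)" "x = Q ! j"
      using \<open>x \<in> (!) Q ` J\<close> by (auto simp: J_def nbrs_def)
    show ?thesis
      using longest_path_rotate[OF Q j(1,2)] rev_take_append_drop[OF j(1)] j(3) by blast
  qed
  show "\<not> E x y" if xy: "x \<in> (!) Q ` J" "y \<in> (!) Q ` J" for x y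
  proof -
    have nonadj: "\<not> E (Q ! j) (Q ! l)" if "j \<in> J" "l \<in> J" "j < l" for j l
      using longest_path_predecessors_nonadjacent[OF Q z(2) \<open>j < l\<close>] that
      by (auto simp: J_def nbrs_def)
    obtain j l where "j \<in> J" "l \<in> J" "x = Q ! j" "y = Q ! l"
      using xy by blast
    then show ?thesis
      using nonadj[of j l] nonadj[of l j] edge_irrefl edge_sym
      by (cases j l rule: linorder_cases) blast+
  qed
qed

end

locale sigma2_star_free_graph = connected_simple_graph +
  fixes t :: nat
  assumes t_ge_5: "5 \<le> t"
    and sigma2: "sigma2_gt V E ((real t - 3) / (real t - 2) * real (card V))"
    and star_free: "\<not> has_induced_star V E t"
begin

lemma sigma2_nonadjacent:
  assumes "x \<in> V" "y \<in> V" "x \<noteq> y" "\<not> E x y"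
  shows "(real t - 3) / (real t - 2) * card V < card (nbrs x) + card (nbrs y)"
proof -
  have "(real t - 3) / (real t - 2) * card V < real (degree V E x + degree V E y)"
    using sigma2 assms unfolding sigma2_gt_def by blast
  then show ?thesis by (simp add: degree_eq_card_nbrs)
qed

lemma independent_nbrs_card_less:
  assumes m: "m \<in> V" and S: "S \<subseteq> nbrs m" and indep: "\<forall>x\<in>S. \<forall>y\<in>S. \<not> E x y"
  shows "card S < t"
proof (rule ccontr)
  assume "\<not> card S < t"
  then have "t \<le> card S" by simp
  then obtain L where L: "L \<subseteq> S" "card L = t" by (rule obtain_subset_with_card_n)
  have "m \<notin> L" "L \<subseteq> V" "\<forall>x\<in>L. E m x"
    using S L(1) edge_irrefl unfolding nbrs_def by blast+
  moreover have "\<forall>x\<in>L. \<forall>y\<in>L. \<not> E x y" using indep L(1) by blast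
  ultimately have "has_induced_star V E t"
    unfolding has_induced_star_def using m L(2) by blast
  with star_free show False ..
qed

lemma common_nbr_independent_nbrs_le:
  assumes "E m b" "E m z" "b \<noteq> z" "\<not> E b z"
    and X: "\<And>x. x \<in> X \<Longrightarrow> x \<noteq> b \<and> x \<noteq> z \<and> \<not> E x b \<and> \<not> E x z"
    and indep: "\<And>x y. x \<in> X \<Longrightarrow> y \<in> X \<Longrightarrow> \<not> E x y"
  shows "card {x \<in> X. E x m} \<le> t - 3"
proof -
  let ?S = "insert b (insert z {x \<in> X. E x m})"
  have "m \<in> V" using assms(1) edge_in_V by blast
  have "card ?S < t"
  proof (rule independent_nbrs_card_less[OF \<open>m \<in> V\<close>])
    show "?S \<subseteq> nbrs m"
      using assms(1,2) edge_sym edge_in_V unfolding nbrs_def by blast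
    show "\<forall>x\<in>?S. \<forall>y\<in>?S. \<not> E x y"
      using indep X \<open>\<not> E b z\<close> edge_sym edge_irrefl by blast
  qed
  moreover have "{x \<in> X. E x m} \<subseteq> nbrs m"
    using edge_sym edge_in_V unfolding nbrs_def by blast
  then have "finite {x \<in> X. E x m}" using finite_nbrs by (rule finite_subset)
  moreover have "b \<notin> X" "z \<notin> X" using X by blast+
  ultimately show ?thesis using assms(3) by simp
qed

lemma longest_path_ends_common_nbrs_ge:
  assumes Q: "longest_path Q" and z: "z \<in> V" "z \<notin> set Q"
  shows "t - 2 \<le> card (nbrs (hd Q) \<inter> nbrs (last Q) \<inter> nbrs z)"
proof -
  let ?a = "hd Q" and ?b = "last Q"
  have ab: "?a \<in> set Q" "?b \<in> set Q" "set Q \<subseteq> V"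
    using Q by (auto simp: longest_path_def is_path_def)
  have "\<not> E ?a z" "\<not> E ?b z"
    using longest_path_hd_nbrs[OF Q] longest_path_last_nbrs[OF Q] z by (auto simp: nbrs_def)
  then have sig: "(real t - 3) / (real t - 2) * card V < card (nbrs ?a) + card (nbrs ?b)"
      "(real t - 3) / (real t - 2) * card V < card (nbrs ?a) + card (nbrs z)"
      "(real t - 3) / (real t - 2) * card V < card (nbrs ?b) + card (nbrs z)"
    using sigma2_nonadjacent ab z longest_path_hd_ne_last[OF Q z]
      longest_path_ends_nonadjacent[OF Q z] by (metis subsetD)+
  have sum: "card (nbrs ?a) + card (nbrs ?b) + card (nbrs z) + 2
      \<le> card V + card (nbrs ?a \<inter> nbrs ?b \<inter> nbrs z)"
    using longest_path_degree_sum[OF Q z] .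
  moreover have "card (nbrs ?a \<inter> nbrs ?b \<inter> nbrs z) \<le> card (nbrs z)"
    by (intro card_mono finite_nbrs) auto
  ultimately have "card (nbrs ?a) + card (nbrs ?b) + 2 \<le> card V" by linarith
  from sigma2_common_nbrs_arith[OF t_ge_5 sum this sig] show ?thesis .
qed

lemma longest_path_hd_common_nbrs_le:
  assumes Q: "longest_path Q" and z: "z \<in> V" "z \<notin> set Q"
  shows "(t - 2) * card (nbrs (hd Q) \<inter> nbrs z) \<le> (t - 3) * card (nbrs (last Q) \<inter> nbrs z)"
proof -
  let ?b = "last Q"
  let ?M = "nbrs ?b \<inter> nbrs z"
  obtain X where card_X: "card X = card (nbrs (hd Q) \<inter> nbrs z)"
    and heads: "\<And>x. x \<in> X \<Longrightarrow> \<exists>R. longest_path R \<and> hd R = x \<and> last R = ?b \<and> set R = set Q"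
    and indep: "\<And>x y. x \<in> X \<Longrightarrow> y \<in> X \<Longrightarrow> \<not> E x y"
    using longest_path_rotation_heads[OF Q z] by blast
  have X: "x \<in> V \<and> x \<noteq> z \<and> x \<noteq> ?b \<and> \<not> E x ?b \<and> \<not> E x z \<and> t - 2 \<le> card (nbrs x \<inter> ?M)"
    if x: "x \<in> X" for x
  proof -
    obtain R where R: "longest_path R" "hd R = x" "last R = ?b" "set R = set Q"
      using heads[OF x] by blast
    then have zR: "z \<notin> set R" and "x \<in> set R" "set R \<subseteq> V"
      using z by (auto simp: longest_path_def is_path_def)
    then show ?thesis
      using R longest_path_hd_ne_last[OF R(1) z(1) zR] longest_path_ends_nonadjacent[OF R(1) z(1) zR]
        longest_path_hd_nbrs[OF R(1)] longest_path_ends_common_nbrs_ge[OF R(1) z(1) zR] z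
      by (auto simp: nbrs_def Int_assoc)
  qed
  have bz: "\<not> E ?b z" "?b \<noteq> z"
    using longest_path_last_nbrs[OF Q] z Q by (auto simp: nbrs_def longest_path_def is_path_def)
  have few: "card {x \<in> X. E x m} \<le> t - 3" if "m \<in> ?M" for m
  proof (rule common_nbr_independent_nbrs_le)
    show "E m ?b" "E m z" using that edge_sym unfolding nbrs_def by blast+
  qed (use X indep bz in auto)
  have "finite X" using X finite_V by (meson finite_subset subsetI)
  moreover have "t - 2 \<le> card {y \<in> ?M. E x y}" if "x \<in> X" for x
  proof -
    have "{y \<in> ?M. E x y} = nbrs x \<inter> ?M" by (auto simp: nbrs_def)
    then show ?thesis using X[OF that] by simp
  qed
  ultimately have "(t - 2) * card X \<le> (t - 3) * card ?M"
    using double_counting_le[of X ?M "t - 2" E "t - 3"] few finite_nbrs by blast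
  then show ?thesis using card_X by simp
qed

lemma longest_path_spans:
  assumes P: "longest_path P"
  shows "set P = V"
proof (rule ccontr)
  assume "set P \<noteq> V"
  then obtain z where z: "z \<in> V" "z \<notin> set P"
    using P unfolding longest_path_def is_path_def by blast
  define x where "x = card (nbrs (hd P) \<inter> nbrs z)"
  define y where "y = card (nbrs (last P) \<inter> nbrs z)"
  have "(t - 2) * x \<le> (t - 3) * y"
    using longest_path_hd_common_nbrs_le[OF P z] by (simp add: x_def y_def)
  moreover have "(t - 2) * y \<le> (t - 3) * x"
    using longest_path_hd_common_nbrs_le[OF longest_path_rev[OF P] z(1)] z(2) P
    by (simp add: x_def y_def hd_rev last_rev longest_path_def is_path_def)
  ultimately have le: "(t - 2) * (x + y) \<le> (t - 3) * (x + y)" by (simp add: add_mult_distrib2)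
  have "card (nbrs (hd P) \<inter> nbrs (last P) \<inter> nbrs z) \<le> x"
    unfolding x_def by (intro card_mono) (auto simp: finite_nbrs)
  then have "0 < x + y" using longest_path_ends_common_nbrs_ge[OF P z] t_ge_5 by linarith
  then have "(t - 3) * (x + y) < (t - 2) * (x + y)" using t_ge_5 by simp
  with le show False by linarith
qed

end

theorem theorem2:
  fixes V :: "'a set" and E :: "'a \<Rightarrow> 'a \<Rightarrow> bool" and t :: nat
  assumes "t \<ge> 5"
    and "simple_graph V E"
    and "connected_graph V E"
    and "sigma2_gt V E ((real t - 3) / (real t - 2) * real (card V))"
  shows "(\<exists>p. hamiltonian_path V E p) \<or> has_induced_star V E t"
proof (rule disjCI)
  assume "\<not> has_induced_star V E t"
  then interpret sigma2_star_free_graph V E t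
    using assms by unfold_locales auto
  obtain P where P: "longest_path P" using exists_longest_path ..
  then have "hamiltonian_path V E P"
    using longest_path_spans[OF P]
    by (simp add: hamiltonian_path_def is_walk_iff_successively longest_path_def is_path_def)
  then show "\<exists>p. hamiltonian_path V E p" ..
qed

end
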